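(* Let $\lambda,\mu\in P^+$ and let $X\subseteq\mathcal{B}(\lambda)$, $Y\subseteq\mathcal{B}(\mu)$ be extremal subsets. Then $X\otimes Y$ is an extremal subset of $\mathcal{B}(\lambda)\otimes\mathcal{B}(\mu)$ if and only if there is no $i\in I$ and no $x\otimes y\in X\otimes Y$ which is a broken $i$-hinge, i.e. such that $\varepsilon_i(x)>0$, $\varphi_i(x)=0$, $\varepsilon_i(y)=0$, $\varphi_i(y)>0$, and $f_i(y)\notin Y$.
   Context: $\mathfrak g$ is a complex semisimple Lie algebra with Dynkin index set $I$ and dominant weights $P^+$. For $\lambda\in P^+$, $\mathcal{B}(\lambda)$ is Kashiwara's crystal of the irreducible module of highest weight $\lambda$, with operators $e_i,f_i:\mathcal{B}(\lambda)\to\mathcal{B}(\lambda)\sqcup\{0\}$, $\varepsilon_i(b)=\max\{k:e_i^k(b)\ne0\}$, $\varphi_i(b)=\max\{k:f_i^k(b)\ne0\}$. The tensor product crystal $\mathcal{B}(\lambda)\otimes\mathcal{B}(\mu)$ has $e_i(b_1\otimes b_2)=e_i(b_1)\otimes b_2$ if $\varepsilon_i(b_2)\le\varphi_i(b_1)$, else $b_1\otimes e_i(b_2)$; $f_i(b_1\otimes b_2)=f_i(b_1)\otimes b_2$ if $\varepsilon_i(b_2)<\varphi_i(b_1)$, else $b_1\otimes f_i(b_2)$. An $i$-string is a connected component of the graph with edges $b\to f_i(b)$. A subset $X$ of a crystal $\mathcal{B}$ is extremal if $X$ is nonempty and for every $i\in I$ and every $i$-string $S$ of $\mathcal{B}$,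 $S\cap X$ is $\varnothing$, $S$, or $\{b\}$ with $b\in S$, $e_i(b)=0$. *)

theory Defs
  imports Main
begin

(* A crystal is given by a carrier set B and Kashiwara operators
   e i, f i :: 'b => 'b option  (None plays the role of 0). *)

definition iter_op :: "('b \<Rightarrow> 'b option) \<Rightarrow> nat \<Rightarrow> 'b \<Rightarrow> 'b option" where
  "iter_op g k b = ((\<lambda>x. Option.bind x g) ^^ k) (Some b)"

definition eps :: "('i \<Rightarrow> 'b \<Rightarrow> 'b option) \<Rightarrow> 'i \<Rightarrow> 'b \<Rightarrow> nat" where
  "eps e i b = (GREATEST k. iter_op (e i) k b \<noteq> None)"

definition phi :: "('i \<Rightarrow> 'b \<Rightarrow> 'b option) \<Rightarrow> 'i \<Rightarrow> 'b \<Rightarrow> nat" where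
  "phi f i b = (GREATEST k. iter_op (f i) k b \<noteq> None)"

(* Finite seminormal crystal: e_i and f_i are mutually inverse partial maps on B
   and all i-strings are finite (no cycles). Every B(lambda) is of this kind. *)
definition seminormal_crystal ::
  "'i set \<Rightarrow> 'b set \<Rightarrow> ('i \<Rightarrow> 'b \<Rightarrow> 'b option) \<Rightarrow> ('i \<Rightarrow> 'b \<Rightarrow> 'b option) \<Rightarrow> bool" where
  "seminormal_crystal I B e f \<longleftrightarrow> finite B \<and>
     (\<forall>i\<in>I. \<forall>b\<in>B. \<forall>b'. f i b = Some b' \<longrightarrow> b' \<in> B \<and> e i b' = Some b) \<and>
     (\<forall>i\<in>I. \<forall>b\<in>B. \<forall>b'. e i b = Some b' \<longrightarrow> b' \<in> B \<and> f i b' = Some b) \<and>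
     (\<forall>i\<in>I. \<forall>b\<in>B. (\<exists>k. iter_op (f i) k b = None) \<and> (\<exists>k. iter_op (e i) k b = None))"

(* Tensor product rule; b1 \<otimes> b2 is represented by the pair (b1, b2). *)
definition tensor_e ::
  "('i \<Rightarrow> 'a \<Rightarrow> 'a option) \<Rightarrow> ('i \<Rightarrow> 'a \<Rightarrow> 'a option) \<Rightarrow>
   ('i \<Rightarrow> 'b \<Rightarrow> 'b option) \<Rightarrow> ('i \<Rightarrow> 'b \<Rightarrow> 'b option) \<Rightarrow>
   'i \<Rightarrow> 'a \<times> 'b \<Rightarrow> ('a \<times> 'b) option" where
  "tensor_e e1 f1 e2 f2 i p =
     (case p of (b1, b2) \<Rightarrow>
        if eps e2 i b2 \<le> phi f1 i b1 then map_option (\<lambda>x. (x, b2)) (e1 i b1)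
        else map_option (\<lambda>y. (b1, y)) (e2 i b2))"

definition tensor_f ::
  "('i \<Rightarrow> 'a \<Rightarrow> 'a option) \<Rightarrow> ('i \<Rightarrow> 'a \<Rightarrow> 'a option) \<Rightarrow>
   ('i \<Rightarrow> 'b \<Rightarrow> 'b option) \<Rightarrow> ('i \<Rightarrow> 'b \<Rightarrow> 'b option) \<Rightarrow>
   'i \<Rightarrow> 'a \<times> 'b \<Rightarrow> ('a \<times> 'b) option" where
  "tensor_f e1 f1 e2 f2 i p =
     (case p of (b1, b2) \<Rightarrow>
        if eps e2 i b2 < phi f1 i b1 then map_option (\<lambda>x. (x, b2)) (f1 i b1)
        else map_option (\<lambda>y. (b1, y)) (f2 i b2))"

definition string_rel :: "'b set \<Rightarrow> ('i \<Rightarrow> 'b \<Rightarrow> 'b option) \<Rightarrow> 'i \<Rightarrow> 'b \<Rightarrow> 'b \<Rightarrow> bool" where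
  "string_rel B f i x y \<longleftrightarrow> x \<in> B \<and> y \<in> B \<and> (f i x = Some y \<or> f i y = Some x)"

definition i_string :: "'b set \<Rightarrow> ('i \<Rightarrow> 'b \<Rightarrow> 'b option) \<Rightarrow> 'i \<Rightarrow> 'b set \<Rightarrow> bool" where
  "i_string B f i S \<longleftrightarrow> (\<exists>b\<in>B. S = {c \<in> B. (string_rel B f i)\<^sup>*\<^sup>* b c})"

definition extremal ::
  "'i set \<Rightarrow> 'b set \<Rightarrow> ('i \<Rightarrow> 'b \<Rightarrow> 'b option) \<Rightarrow> ('i \<Rightarrow> 'b \<Rightarrow> 'b option) \<Rightarrow> 'b set \<Rightarrow> bool" where
  "extremal I B e f X \<longleftrightarrow> X \<noteq> {} \<and> X \<subseteq> B \<and>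
     (\<forall>i\<in>I. \<forall>S. i_string B f i S \<longrightarrow>
        S \<inter> X = {} \<or> S \<inter> X = S \<or> (\<exists>b\<in>S. S \<inter> X = {b} \<and> e i b = None))"

end

(* For a single colour i the string condition is local: a subset X of a seminormal crystal
   is extremal at i iff it is closed under e_i, and under f_i at every element that e_i does
   not kill.  Indeed every i-string has exactly one element killed by e_i (the common value of
   e_i^max along the string), and such closure spreads along a whole string as soon as it
   contains a point of X not killed by e_i.
   The tensor product rule moves one factor at a time, so X \<otimes> Y inherits closure under e_i
   and under f_i except in one configuration: if phi_i(x) = 0 = eps_i(y) and e_i(x) \<noteq> 0, then
   e_i acts on x while f_i acts on y, and closure demands f_i(y) \<in> Y.  This is exactly the
   broken hinge. *)

theory Submission
  imports Defs
begin

lemma iter_op_0 [simp]: "iter_op g 0 b = Some b"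
  by (simp add: iter_op_def)

lemma iter_op_Suc:
  "iter_op g (Suc k) b = (case g b of None \<Rightarrow> None | Some c \<Rightarrow> iter_op g k c)"
proof -
  have "((\<lambda>x. Option.bind x g) ^^ k) None = None" for k
    by (induction k) simp_all
  then show ?thesis
    unfolding iter_op_def funpow_Suc_right comp_def by (simp split: option.split)
qed

lemma iter_op_None_mono: "iter_op g k b = None \<Longrightarrow> k \<le> n \<Longrightarrow> iter_op g n b = None"
proof (induction k arbitrary: b n)
  case 0
  then show ?case by simp
next
  case (Suc k)
  then obtain n' where "n = Suc n'" "k \<le> n'" by (cases n) auto
  with Suc show ?case by (auto simp: iter_op_Suc split: option.splits)
qed

lemma iter_op_terminates:
  assumes "\<And>b c. b \<in> A \<Longrightarrow> g b = Some c \<Longrightarrow> c \<in> A \<and> m c < (m b :: nat)" and "b \<in> A"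
  shows "\<exists>k. iter_op g k b = None"
  using assms(2)
proof (induction "m b" arbitrary: b rule: less_induct)
  case less
  show ?case
  proof (cases "g b")
    case None
    then have "iter_op g 1 b = None"
      by (simp add: iter_op_Suc)
    then show ?thesis ..
  next
    case (Some c)
    then obtain k where "iter_op g k c = None"
      using assms(1) less by blast
    with Some have "iter_op g (Suc k) b = None"
      by (simp add: iter_op_Suc)
    then show ?thesis ..
  qed
qed

lemma phi_eq_eps: "phi f i b = eps f i b"
  by (simp add: phi_def eps_def)

lemma eps_None: "e i b = None \<Longrightarrow> eps e i b = 0"
  unfolding eps_def
proof (rule Greatest_equality)
  show "n \<le> 0" if "iter_op (e i) n b \<noteq> None" and "e i b = None" for n
    using that by (cases n) (auto simp: iter_op_Suc)
qed simp

lemma eps_Some: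
  assumes "e i b = Some c" and "iter_op (e i) k c = None"
  shows "eps e i b = Suc (eps e i c)"
proof -
  have bounded: "iter_op (e i) n c \<noteq> None \<Longrightarrow> n \<le> k" for n
    using iter_op_None_mono[OF assms(2)] by (metis nle_le)
  have top: "iter_op (e i) (eps e i c) c \<noteq> None"
    unfolding eps_def by (rule GreatestI_nat[of _ 0 k]) (auto simp: bounded)
  have greatest: "iter_op (e i) n c \<noteq> None \<Longrightarrow> n \<le> eps e i c" for n
    unfolding eps_def by (rule Greatest_le_nat[of _ _ k]) (auto simp: bounded)
  show ?thesis
    unfolding eps_def[of e i b]
  proof (rule Greatest_equality)
    show "iter_op (e i) (Suc (eps e i c)) b \<noteq> None"
      using top by (simp add: assms(1) iter_op_Suc)
    show "n \<le> Suc (eps e i c)" if "iter_op (e i) n b \<noteq> None" for n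
      using that greatest by (cases n) (auto simp: assms(1) iter_op_Suc)
  qed
qed

locale seminormal_at =
  fixes B :: "'b set" and e f :: "'i \<Rightarrow> 'b \<Rightarrow> 'b option" and i :: 'i
  assumes f_Some_e: "b \<in> B \<Longrightarrow> f i b = Some c \<Longrightarrow> c \<in> B \<and> e i c = Some b"
    and e_Some_f: "b \<in> B \<Longrightarrow> e i b = Some c \<Longrightarrow> c \<in> B \<and> f i c = Some b"
    and f_terminates: "b \<in> B \<Longrightarrow> \<exists>k. iter_op (f i) k b = None"
    and e_terminates: "b \<in> B \<Longrightarrow> \<exists>k. iter_op (e i) k b = None"

lemma seminormal_crystal_imp_seminormal_at:
  "seminormal_crystal I B e f \<Longrightarrow> i \<in> I \<Longrightarrow> seminormal_at B e f i"
  unfolding seminormal_crystal_def by unfold_locales blast+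

context seminormal_at
begin

lemma eps_phi_e_Some:
  assumes "b \<in> B" and "e i b = Some c"
  shows "eps e i b = Suc (eps e i c)" and "phi f i c = Suc (phi f i b)"
proof -
  have "c \<in> B" and fc: "f i c = Some b" using e_Some_f assms by blast+
  then show "eps e i b = Suc (eps e i c)"
    using e_terminates eps_Some assms(2) by metis
  show "phi f i c = Suc (phi f i b)"
    using f_terminates[OF assms(1)] eps_Some[of f i, OF fc] by (metis phi_eq_eps)
qed

lemma eps_phi_f_Some:
  assumes "b \<in> B" and "f i b = Some c"
  shows "phi f i b = Suc (phi f i c)" and "eps e i c = Suc (eps e i b)"
proof -
  have "c \<in> B" and ec: "e i c = Some b" using f_Some_e assms by blast+
  then show "phi f i b = Suc (phi f i c)"
    using f_terminates eps_Some assms(2) by (metis phi_eq_eps)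
  show "eps e i c = Suc (eps e i b)"
    using e_terminates[OF assms(1)] eps_Some[of e i, OF ec] by metis
qed

lemma eps_pos_iff: "b \<in> B \<Longrightarrow> 0 < eps e i b \<longleftrightarrow> e i b \<noteq> None"
  using eps_None eps_phi_e_Some(1) by fastforce

lemma phi_pos_iff: "b \<in> B \<Longrightarrow> 0 < phi f i b \<longleftrightarrow> f i b \<noteq> None"
  using eps_None[of f] eps_phi_f_Some(1) by (fastforce simp: phi_eq_eps)

end

definition extremal_at ::
  "'b set \<Rightarrow> ('i \<Rightarrow> 'b \<Rightarrow> 'b option) \<Rightarrow> ('i \<Rightarrow> 'b \<Rightarrow> 'b option) \<Rightarrow> 'i \<Rightarrow> 'b set \<Rightarrow> bool" where
  "extremal_at B e f i X \<longleftrightarrow> (\<forall>S. i_string B f i S \<longrightarrow>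
     S \<inter> X = {} \<or> S \<inter> X = S \<or> (\<exists>b\<in>S. S \<inter> X = {b} \<and> e i b = None))"

lemma extremal_iff_extremal_at:
  "extremal I B e f X \<longleftrightarrow> X \<noteq> {} \<and> X \<subseteq> B \<and> (\<forall>i\<in>I. extremal_at B e f i X)"
  by (auto simp: extremal_def extremal_at_def)

definition string_closed ::
  "('i \<Rightarrow> 'b \<Rightarrow> 'b option) \<Rightarrow> ('i \<Rightarrow> 'b \<Rightarrow> 'b option) \<Rightarrow> 'i \<Rightarrow> 'b set \<Rightarrow> bool" where
  "string_closed e f i X \<longleftrightarrow>
     (\<forall>x\<in>X. \<forall>y. e i x = Some y \<longrightarrow> y \<in> X) \<and>
     (\<forall>x\<in>X. \<forall>y. e i x \<noteq> None \<longrightarrow> f i x = Some y \<longrightarrow> y \<in> X)"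

lemma string_closed_e:
  "string_closed e f i X \<Longrightarrow> x \<in> X \<Longrightarrow> e i x = Some y \<Longrightarrow> y \<in> X"
  unfolding string_closed_def by blast

lemma string_closed_f:
  "string_closed e f i X \<Longrightarrow> x \<in> X \<Longrightarrow> e i x \<noteq> None \<Longrightarrow> f i x = Some y \<Longrightarrow> y \<in> X"
  unfolding string_closed_def by blast

lemma string_rel_rtranclp_sym:
  "(string_rel B f i)\<^sup>*\<^sup>* b c \<Longrightarrow> (string_rel B f i)\<^sup>*\<^sup>* c b"
  by (rule sympD[OF symp_rtranclp]) (auto simp: symp_def string_rel_def)

context seminormal_at
begin

definition e_max :: "'b \<Rightarrow> 'b option" where
  "e_max b = iter_op (e i) (eps e i b) b"

lemma e_max_string_rel:
  assumes "string_rel B f i b c"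
  shows "e_max b = e_max c"
proof -
  have e_step: "e_max b = e_max c" if "b \<in> B" and "e i b = Some c" for b c
    using that by (simp add: e_max_def eps_phi_e_Some(1)[OF that] iter_op_Suc)
  from assms have "b \<in> B" "c \<in> B" "f i b = Some c \<or> f i c = Some b"
    unfolding string_rel_def by auto
  then show ?thesis
    using e_step f_Some_e by metis
qed

lemma string_highest_unique:
  assumes "(string_rel B f i)\<^sup>*\<^sup>* b c" and "e i b = None" and "e i c = None"
  shows "b = c"
proof -
  have "e_max b = e_max c"
    using assms(1) by induction (simp_all add: e_max_string_rel)
  with assms(2,3) show ?thesis
    by (simp add: e_max_def eps_None)
qed

lemma extremal_at_imp_string_closed:
  assumes "X \<subseteq> B" and "extremal_at B e f i X"
  shows "string_closed e f i X"
  unfolding string_closed_def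
proof (intro conjI ballI allI impI)
  fix x y assume "x \<in> X"
  define S where "S = {c \<in> B. (string_rel B f i)\<^sup>*\<^sup>* x c}"
  have "i_string B f i S" and "x \<in> S"
    using \<open>x \<in> X\<close> assms(1) unfolding i_string_def S_def by auto
  then consider "S \<inter> X = {}" | "S \<inter> X = S" | b where "S \<inter> X = {b}" and "e i b = None"
    using assms(2) unfolding extremal_at_def by blast
  then have whole_or_top: "S \<subseteq> X \<or> e i x = None"
  proof cases
    case 1
    then show ?thesis using \<open>x \<in> S\<close> \<open>x \<in> X\<close> by blast
  next
    case 2
    then show ?thesis by (simp add: inf.absorb_iff1)
  next
    case 3
    then show ?thesis using \<open>x \<in> S\<close> \<open>x \<in> X\<close> by (metis IntI singletonD)
  qed
  have neighbour: "y \<in> S" if "string_rel B f i x y"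
    using that unfolding string_rel_def S_def by auto
  show "y \<in> X" if "e i x = Some y"
  proof -
    have "string_rel B f i x y"
      using that e_Some_f \<open>x \<in> X\<close> assms(1) unfolding string_rel_def by blast
    then show ?thesis using that whole_or_top neighbour by auto
  qed
  show "y \<in> X" if "e i x \<noteq> None" and "f i x = Some y"
  proof -
    have "string_rel B f i x y"
      using that f_Some_e \<open>x \<in> X\<close> assms(1) unfolding string_rel_def by blast
    then show ?thesis using that whole_or_top neighbour by auto
  qed
qed

lemma string_closed_propagates:
  assumes "string_closed e f i X" and "(string_rel B f i)\<^sup>*\<^sup>* z c"
    and "z \<in> X" and "e i z \<noteq> None"
  shows "c \<in> X"
proof -
  define X' where "X' = {x \<in> X. \<forall>y. f i x = Some y \<longrightarrow> y \<in> X}"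
  have step: "d \<in> X'" if "c \<in> X'" and "string_rel B f i c d" for c d
  proof -
    have "c \<in> X" and c_raises: "f i c = Some y \<Longrightarrow> y \<in> X" for y
      using that(1) unfolding X'_def by auto
    from that(2) have "c \<in> B" "d \<in> B" and "f i c = Some d \<or> f i d = Some c"
      unfolding string_rel_def by auto
    then consider "f i c = Some d" "e i d = Some c" | "f i d = Some c" "e i c = Some d"
      using f_Some_e by blast
    then show ?thesis
    proof cases
      case 1
      then have "d \<in> X"
        using c_raises by blast
      then show ?thesis
        using 1 string_closed_f[OF assms(1)] unfolding X'_def by blast
    next
      case 2
      then have "d \<in> X"
        using \<open>c \<in> X\<close> string_closed_e[OF assms(1)] by blast
      then show ?thesis
        using 2 \<open>c \<in> X\<close> unfolding X'_def by simp
    qed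
  qed
  have "z \<in> X'"
    using assms(3,4) string_closed_f[OF assms(1)] unfolding X'_def by blast
  with assms(2) have "c \<in> X'"
    by induction (auto intro: step)
  then show ?thesis
    unfolding X'_def by blast
qed

lemma string_closed_imp_extremal_at:
  assumes "string_closed e f i X"
  shows "extremal_at B e f i X"
  unfolding extremal_at_def
proof (intro allI impI)
  fix S assume "i_string B f i S"
  then obtain b where S: "S = {c \<in> B. (string_rel B f i)\<^sup>*\<^sup>* b c}"
    unfolding i_string_def by blast
  have connected: "(string_rel B f i)\<^sup>*\<^sup>* c d" if "c \<in> S" and "d \<in> S" for c d
    using that string_rel_rtranclp_sym rtranclp_trans unfolding S by (metis mem_Collect_eq)
  show "S \<inter> X = {} \<or> S \<inter> X = S \<or> (\<exists>b\<in>S. S \<inter> X = {b} \<and> e i b = None)"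
  proof (cases "\<exists>z\<in>S \<inter> X. e i z \<noteq> None")
    case True
    then obtain z where "z \<in> S" "z \<in> X" "e i z \<noteq> None"
      by blast
    then have "S \<subseteq> X"
      using connected string_closed_propagates[OF assms] by blast
    then show ?thesis
      by (simp add: inf.absorb_iff1)
  next
    case False
    then have unique: "c = d" if "c \<in> S \<inter> X" and "d \<in> S \<inter> X" for c d
      using that connected string_highest_unique by blast
    show ?thesis
    proof (cases "S \<inter> X = {}")
      case True
      then show ?thesis by simp
    next
      case False
      then obtain c where c: "c \<in> S \<inter> X"
        by blast
      with unique have "S \<inter> X = {c}"
        by blast
      moreover have "e i c = None"
        using c \<open>\<not> (\<exists>z\<in>S \<inter> X. e i z \<noteq> None)\<close> by blast
      moreover have "c \<in> S"
        using c by blast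
      ultimately show ?thesis
        by metis
    qed
  qed
qed

theorem extremal_at_iff_string_closed:
  "X \<subseteq> B \<Longrightarrow> extremal_at B e f i X \<longleftrightarrow> string_closed e f i X"
  using extremal_at_imp_string_closed string_closed_imp_extremal_at by blast

end

definition broken_hinge ::
  "('i \<Rightarrow> 'a \<Rightarrow> 'a option) \<Rightarrow> ('i \<Rightarrow> 'a \<Rightarrow> 'a option) \<Rightarrow>
   ('i \<Rightarrow> 'b \<Rightarrow> 'b option) \<Rightarrow> ('i \<Rightarrow> 'b \<Rightarrow> 'b option) \<Rightarrow> 'b set \<Rightarrow> 'i \<Rightarrow> 'a \<Rightarrow> 'b \<Rightarrow> bool" where
  "broken_hinge e1 f1 e2 f2 Y i x y \<longleftrightarrow> 0 < eps e1 i x \<and> phi f1 i x = 0 \<and> eps e2 i y = 0 \<and>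
     0 < phi f2 i y \<and> f2 i y \<notin> Some ` Y"

locale seminormal_tensor_at = C1: seminormal_at B1 e1 f1 i + C2: seminormal_at B2 e2 f2 i
  for B1 :: "'a set" and e1 f1 :: "'i \<Rightarrow> 'a \<Rightarrow> 'a option"
    and B2 :: "'b set" and e2 f2 :: "'i \<Rightarrow> 'b \<Rightarrow> 'b option" and i :: 'i
begin

lemma tensor_f_Some:
  assumes "x \<in> B1" and "y \<in> B2" and "tensor_f e1 f1 e2 f2 i (x, y) = Some p"
  shows "p \<in> B1 \<times> B2 \<and> tensor_e e1 f1 e2 f2 i p = Some (x, y) \<and>
    phi f1 i (fst p) + phi f2 i (snd p) < phi f1 i x + phi f2 i y"
proof (cases "eps e2 i y < phi f1 i x")
  case True
  then obtain x' where fx: "f1 i x = Some x'" and p: "p = (x', y)"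
    using assms(3) by (auto simp: tensor_f_def)
  show ?thesis
    using C1.eps_phi_f_Some[OF assms(1) fx] C1.f_Some_e[OF assms(1) fx] True assms(2) p
    by (auto simp: tensor_e_def)
next
  case False
  then obtain y' where fy: "f2 i y = Some y'" and p: "p = (x, y')"
    using assms(3) by (auto simp: tensor_f_def)
  show ?thesis
    using C2.eps_phi_f_Some[OF assms(2) fy] C2.f_Some_e[OF assms(2) fy] False assms(1) p
    by (auto simp: tensor_e_def)
qed

lemma tensor_e_Some:
  assumes "x \<in> B1" and "y \<in> B2" and "tensor_e e1 f1 e2 f2 i (x, y) = Some p"
  shows "p \<in> B1 \<times> B2 \<and> tensor_f e1 f1 e2 f2 i p = Some (x, y) \<and>
    eps e1 i (fst p) + eps e2 i (snd p) < eps e1 i x + eps e2 i y"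
proof (cases "eps e2 i y \<le> phi f1 i x")
  case True
  then obtain x' where ex: "e1 i x = Some x'" and p: "p = (x', y)"
    using assms(3) by (auto simp: tensor_e_def)
  show ?thesis
    using C1.eps_phi_e_Some[OF assms(1) ex] C1.e_Some_f[OF assms(1) ex] True assms(2) p
    by (auto simp: tensor_f_def)
next
  case False
  then obtain y' where ey: "e2 i y = Some y'" and p: "p = (x, y')"
    using assms(3) by (auto simp: tensor_e_def)
  show ?thesis
    using C2.eps_phi_e_Some[OF assms(2) ey] C2.e_Some_f[OF assms(2) ey] False assms(1) p
    by (auto simp: tensor_f_def)
qed

lemma seminormal_at_tensor:
  "seminormal_at (B1 \<times> B2) (tensor_e e1 f1 e2 f2) (tensor_f e1 f1 e2 f2) i"
proof
  show "b \<in> B1 \<times> B2 \<Longrightarrow> tensor_f e1 f1 e2 f2 i b = Some c \<Longrightarrow>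
      c \<in> B1 \<times> B2 \<and> tensor_e e1 f1 e2 f2 i c = Some b" for b c
    using tensor_f_Some by (cases b) blast
  show "b \<in> B1 \<times> B2 \<Longrightarrow> tensor_e e1 f1 e2 f2 i b = Some c \<Longrightarrow>
      c \<in> B1 \<times> B2 \<and> tensor_f e1 f1 e2 f2 i c = Some b" for b c
    using tensor_e_Some by (cases b) blast
  show "b \<in> B1 \<times> B2 \<Longrightarrow> \<exists>k. iter_op (tensor_f e1 f1 e2 f2 i) k b = None" for b
  proof (rule iter_op_terminates[where m = "\<lambda>p. phi f1 i (fst p) + phi f2 i (snd p)"])
    show "c \<in> B1 \<times> B2 \<and> phi f1 i (fst c) + phi f2 i (snd c) < phi f1 i (fst p) + phi f2 i (snd p)"
      if "p \<in> B1 \<times> B2" and "tensor_f e1 f1 e2 f2 i p = Some c" for p c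
      using that tensor_f_Some[of "fst p" "snd p" c] by (simp add: mem_Times_iff)
  qed
  show "b \<in> B1 \<times> B2 \<Longrightarrow> \<exists>k. iter_op (tensor_e e1 f1 e2 f2 i) k b = None" for b
  proof (rule iter_op_terminates[where m = "\<lambda>p. eps e1 i (fst p) + eps e2 i (snd p)"])
    show "c \<in> B1 \<times> B2 \<and> eps e1 i (fst c) + eps e2 i (snd c) < eps e1 i (fst p) + eps e2 i (snd p)"
      if "p \<in> B1 \<times> B2" and "tensor_e e1 f1 e2 f2 i p = Some c" for p c
      using that tensor_e_Some[of "fst p" "snd p" c] by (simp add: mem_Times_iff)
  qed
qed

lemma tensor_e_closed:
  assumes "string_closed e1 f1 i X" and "string_closed e2 f2 i Y"
    and "x \<in> X" and "y \<in> Y" and "tensor_e e1 f1 e2 f2 i (x, y) = Some p"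
  shows "p \<in> X \<times> Y"
  using assms string_closed_e[OF assms(1)] string_closed_e[OF assms(2)]
  by (auto simp: tensor_e_def split: if_splits)

lemma broken_hinge_escapes:
  assumes "broken_hinge e1 f1 e2 f2 Y i x y"
  obtains y' where "tensor_e e1 f1 e2 f2 i (x, y) \<noteq> None"
    and "tensor_f e1 f1 e2 f2 i (x, y) = Some (x, y')" and "y' \<notin> Y"
proof -
  have "e1 i x \<noteq> None"
    using assms eps_None[of e1 i x] unfolding broken_hinge_def by auto
  moreover obtain y' where "f2 i y = Some y'" and "y' \<notin> Y"
    using assms eps_None[of f2 i y] unfolding broken_hinge_def phi_eq_eps by auto
  ultimately show ?thesis
    using that assms unfolding broken_hinge_def by (simp add: tensor_e_def tensor_f_def)
qed

lemma tensor_f_closed: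
  assumes "X \<subseteq> B1" and "Y \<subseteq> B2"
    and "string_closed e1 f1 i X" and "string_closed e2 f2 i Y"
    and "x \<in> X" and "y \<in> Y" and "\<not> broken_hinge e1 f1 e2 f2 Y i x y"
    and "tensor_e e1 f1 e2 f2 i (x, y) \<noteq> None" and "tensor_f e1 f1 e2 f2 i (x, y) = Some p"
  shows "p \<in> X \<times> Y"
proof (cases "eps e2 i y < phi f1 i x")
  case True
  then obtain x' where "f1 i x = Some x'" and "p = (x', y)" and "e1 i x \<noteq> None"
    using assms(8,9) by (auto simp: tensor_e_def tensor_f_def)
  then show ?thesis
    using string_closed_f[OF assms(3) assms(5)] assms(6) by blast
next
  case False
  then obtain y' where fy: "f2 i y = Some y'" and p: "p = (x, y')"
    using assms(9) by (auto simp: tensor_f_def)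
  show ?thesis
  proof (cases "e2 i y = None")
    case True
    then have "eps e2 i y = 0" and "phi f1 i x = 0"
      using False by (simp_all add: eps_None)
    then have "e1 i x \<noteq> None"
      using assms(8) by (simp add: tensor_e_def)
    then have "0 < eps e1 i x" and "0 < phi f2 i y"
      using C1.eps_pos_iff C2.phi_pos_iff fy assms(1,2,5,6) by blast+
    with assms(7) \<open>eps e2 i y = 0\<close> \<open>phi f1 i x = 0\<close> have "y' \<in> Y"
      using fy unfolding broken_hinge_def by auto
    then show ?thesis
      using p assms(5) by blast
  next
    case False
    then show ?thesis
      using string_closed_f[OF assms(4) assms(6) False fy] p assms(5) by blast
  qed
qed

lemma string_closed_tensor_iff:
  assumes "X \<subseteq> B1" and "Y \<subseteq> B2"
    and closed_X: "string_closed e1 f1 i X" and closed_Y: "string_closed e2 f2 i Y"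
  shows "string_closed (tensor_e e1 f1 e2 f2) (tensor_f e1 f1 e2 f2) i (X \<times> Y) \<longleftrightarrow>
    (\<forall>x\<in>X. \<forall>y\<in>Y. \<not> broken_hinge e1 f1 e2 f2 Y i x y)"
proof
  assume closed: "string_closed (tensor_e e1 f1 e2 f2) (tensor_f e1 f1 e2 f2) i (X \<times> Y)"
  show "\<forall>x\<in>X. \<forall>y\<in>Y. \<not> broken_hinge e1 f1 e2 f2 Y i x y"
  proof (intro ballI notI)
    fix x y assume "x \<in> X" and "y \<in> Y" and "broken_hinge e1 f1 e2 f2 Y i x y"
    obtain y' where "tensor_e e1 f1 e2 f2 i (x, y) \<noteq> None"
      and "tensor_f e1 f1 e2 f2 i (x, y) = Some (x, y')" and "y' \<notin> Y"
      using \<open>broken_hinge e1 f1 e2 f2 Y i x y\<close> by (rule broken_hinge_escapes)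
    then show False
      using string_closed_f[OF closed] \<open>x \<in> X\<close> \<open>y \<in> Y\<close> by blast
  qed
next
  assume no_hinge: "\<forall>x\<in>X. \<forall>y\<in>Y. \<not> broken_hinge e1 f1 e2 f2 Y i x y"
  show "string_closed (tensor_e e1 f1 e2 f2) (tensor_f e1 f1 e2 f2) i (X \<times> Y)"
    unfolding string_closed_def
  proof (intro conjI ballI allI impI)
    fix p q assume "p \<in> X \<times> Y"
    then obtain x y where p: "p = (x, y)" and "x \<in> X" and "y \<in> Y"
      by blast
    show "q \<in> X \<times> Y" if "tensor_e e1 f1 e2 f2 i p = Some q"
      using tensor_e_closed[OF closed_X closed_Y \<open>x \<in> X\<close> \<open>y \<in> Y\<close>] that p by blast
    show "q \<in> X \<times> Y"
      if "tensor_e e1 f1 e2 f2 i p \<noteq> None" and "tensor_f e1 f1 e2 f2 i p = Some q"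
      using tensor_f_closed[OF assms \<open>x \<in> X\<close> \<open>y \<in> Y\<close>] no_hinge that p
        \<open>x \<in> X\<close> \<open>y \<in> Y\<close> by blast
  qed
qed

end

lemma extremal_iff_string_closed:
  assumes "\<And>i. i \<in> I \<Longrightarrow> seminormal_at B e f i"
  shows "extremal I B e f X \<longleftrightarrow> X \<noteq> {} \<and> X \<subseteq> B \<and> (\<forall>i\<in>I. string_closed e f i X)"
  using seminormal_at.extremal_at_iff_string_closed[OF assms] extremal_iff_extremal_at
  by metis

theorem theorem7p3:
  fixes I :: "'i set" and B1 :: "'a set" and B2 :: "'b set"
    and e1 f1 :: "'i \<Rightarrow> 'a \<Rightarrow> 'a option" and e2 f2 :: "'i \<Rightarrow> 'b \<Rightarrow> 'b option"
    and X :: "'a set" and Y :: "'b set"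
  assumes "seminormal_crystal I B1 e1 f1" and "seminormal_crystal I B2 e2 f2"
    and "extremal I B1 e1 f1 X" and "extremal I B2 e2 f2 Y"
  shows "extremal I (B1 \<times> B2) (tensor_e e1 f1 e2 f2) (tensor_f e1 f1 e2 f2) (X \<times> Y) \<longleftrightarrow>
    \<not> (\<exists>i\<in>I. \<exists>x\<in>X. \<exists>y\<in>Y. eps e1 i x > 0 \<and> phi f1 i x = 0 \<and> eps e2 i y = 0 \<and>
          phi f2 i y > 0 \<and> f2 i y \<notin> Some ` Y)"
proof -
  have tensor: "seminormal_tensor_at B1 e1 f1 B2 e2 f2 i" if "i \<in> I" for i
    using assms(1,2) that by (simp add: seminormal_tensor_at_def seminormal_crystal_imp_seminormal_at)
  then have at1: "seminormal_at B1 e1 f1 i" and at2: "seminormal_at B2 e2 f2 i" if "i \<in> I" for i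
    using that by (simp_all add: seminormal_tensor_at_def)
  have X: "X \<noteq> {}" "X \<subseteq> B1" "\<forall>i\<in>I. string_closed e1 f1 i X"
    using assms(3) extremal_iff_string_closed[OF at1] by blast+
  have Y: "Y \<noteq> {}" "Y \<subseteq> B2" "\<forall>i\<in>I. string_closed e2 f2 i Y"
    using assms(4) extremal_iff_string_closed[OF at2] by blast+
  have "extremal I (B1 \<times> B2) (tensor_e e1 f1 e2 f2) (tensor_f e1 f1 e2 f2) (X \<times> Y) \<longleftrightarrow>
      (\<forall>i\<in>I. string_closed (tensor_e e1 f1 e2 f2) (tensor_f e1 f1 e2 f2) i (X \<times> Y))"
    using extremal_iff_string_closed[of I, OF seminormal_tensor_at.seminormal_at_tensor[OF tensor]]
      X(1,2) Y(1,2) by (simp add: Sigma_mono)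
  also have "\<dots> \<longleftrightarrow> (\<forall>i\<in>I. \<forall>x\<in>X. \<forall>y\<in>Y. \<not> broken_hinge e1 f1 e2 f2 Y i x y)"
    using seminormal_tensor_at.string_closed_tensor_iff[OF tensor] X(2,3) Y(2,3) by simp
  finally show ?thesis
    by (simp add: broken_hinge_def)
qed

end
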